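(* Let $i\ge 2$ and let $c_0,\dots,c_{i-1}$ be the vertices of a cycle (in this cyclic order), each with a positive weight $w(c_j)$, and let $W=\sum_j w(c_j)$. Run the following procedure (BalanceInCycle): initialize $b_{OPT}\gets 0$, a queue $Q_1$ empty and a queue $Q_2$ containing $c_0,c_1,\dots,c_{i-1}$ in this order (head $c_0$). Repeat the following iteration until $c_0$ becomes the head of $Q_1$ for the second time: update $b_{OPT}\gets\max\{b_{OPT},\min(w(Q_1),w(Q_2))\}$; then, if $w(Q_1)>w(Q_2)$, dequeue the head of $Q_1$ and append it to the tail of $Q_2$, otherwise dequeue the head of $Q_2$ and append it to the tail of $Q_1$. Then the procedure finds the most balanced cut of the cycle, i.e. at termination $b_{OPT}$ equals $\max_J \min\{w(J),W-w(J)\}$, where $J$ ranges over all non-empty proper subsets of $\{c_0,\dots,c_{i-1}\}$ that are contiguous in the cyclic order (equivalently, over all cuts of the cycle consisting of two distinct cycle edges) and $w(J)=\sum_{c\in J}w(c)$.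
   Context: $w(Q)$ denotes the sum of the weights of the elements currently in queue $Q$. Queues are FIFO. In the paper's application, the cycle is a cycle of the cactus representation of all minimum cuts of a graph $G$ with $n$ vertices (so $W=n$), $w(c_j)$ is the number of vertices of $G$ represented in the sub-cactus hanging off $c_j$, each pair of cycle edges gives a minimum cut of $G$, and the balance of a cut is the number of vertices of $G$ on its lighter side. *)

theory Defs
  imports Complex_Main
begin

text \<open>Cycle vertices c_0..c_(i-1) are represented by indices 0..i-1; queues are lists
  (head = first element). w(Q) is the total weight of a queue.\<close>

definition qweight :: "(nat \<Rightarrow> real) \<Rightarrow> nat list \<Rightarrow> real" where
  "qweight w Q = sum_list (map w Q)"

definition bic_step :: "(nat \<Rightarrow> real) \<Rightarrow> nat list \<times> nat list \<times> real \<Rightarrow> nat list \<times> nat list \<times> real" where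
  "bic_step w st = (case st of (Q1, Q2, b) \<Rightarrow>
     (let b' = max b (min (qweight w Q1) (qweight w Q2)) in
      if qweight w Q1 > qweight w Q2 then (tl Q1, Q2 @ [hd Q1], b')
      else (Q1 @ [hd Q2], tl Q2, b')))"

definition bic_state :: "(nat \<Rightarrow> real) \<Rightarrow> nat \<Rightarrow> nat \<Rightarrow> nat list \<times> nat list \<times> real" where
  "bic_state w i k = (bic_step w ^^ k) ([], [0..<i], 0)"

definition head_is_c0 :: "nat list \<Rightarrow> bool" where
  "head_is_c0 Q \<longleftrightarrow> Q \<noteq> [] \<and> hd Q = 0"

definition bic_becomes :: "(nat \<Rightarrow> real) \<Rightarrow> nat \<Rightarrow> nat \<Rightarrow> bool" where
  "bic_becomes w i t \<longleftrightarrow> 0 < t \<and> head_is_c0 (fst (bic_state w i t))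
      \<and> \<not> head_is_c0 (fst (bic_state w i (t - 1)))"

definition cycle_arcs :: "nat \<Rightarrow> nat set set" where
  "cycle_arcs i = {{(s + j) mod i | j. j < l} | s l. s < i \<and> 0 < l \<and> l < i}"

definition best_balance :: "(nat \<Rightarrow> real) \<Rightarrow> nat \<Rightarrow> real" where
  "best_balance w i = Max ((\<lambda>J. min (sum w J) (sum w {..<i} - sum w J)) ` cycle_arcs i)"

end

theory Submission
  imports Defs
begin

(* Throughout the run Q1 and Q2 are the complementary arcs c_r, ..., c_(e-1) and
   c_e, ..., c_(r+i-1) (indices mod i), whose endpoints r and e only move forward, and
   min(w Q1, w Q2) is the balance of the cut between them; hence b_OPT never exceeds the
   optimum. Conversely, the cut separating c_s, ..., c_(c-1) from the rest is dominated at
   the moment c_s leaves Q1: then Q2 is the lighter queue and contains the far side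
   c_c, ..., c_(s+i-1). The exception is when c_c has already left Q2; at that earlier moment
   Q1 was the lighter queue and contained the near side. Both moments precede the halt. *)

lemma inj_on_mod_interval:
  fixes i :: nat
  assumes "l \<le> i"
  shows "inj_on (\<lambda>j. j mod i) {s..<s + l}"
proof -
  have same: "x = y" if "x \<in> {s..<s + l}" "y \<in> {s..<s + l}" "x \<le> y" "x mod i = y mod i" for x y
  proof -
    have "i dvd y - x" using that(4) by (subst mod_eq_dvd_iff_nat[OF that(3), symmetric]) simp
    moreover have "y - x < i" using that(1,2) assms by auto
    ultimately have "y - x = 0" using nat_dvd_not_less by blast
    then show "x = y" using that(3) by simp
  qed
  show ?thesis
  proof (rule inj_onI)
    fix x y assume "x \<in> {s..<s + l}" "y \<in> {s..<s + l}" "x mod i = y mod i"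
    then show "x = y" using same[of x y] same[of y x] by (cases "x \<le> y") auto
  qed
qed

lemma unit_step_crossing:
  fixes f :: "nat \<Rightarrow> nat"
  assumes step: "\<And>t. f (Suc t) \<le> Suc (f t)" and "f 0 \<le> v" and "v < f t"
  shows "\<exists>u<t. f u = v \<and> f (Suc u) = Suc v"
  using assms(3)
proof (induction t)
  case 0
  then show ?case using assms(2) by simp
next
  case (Suc t)
  show ?case
  proof (cases "v < f t")
    case True
    then show ?thesis using Suc.IH less_SucI by blast
  next
    case False
    then have "f t = v \<and> f (Suc t) = Suc v" using Suc.prems step[of t] by simp
    then show ?thesis by blast
  qed
qed

locale balance_in_cycle =
  fixes w :: "nat \<Rightarrow> real" and i :: nat
  assumes two_le_i: "2 \<le> i" and pos: "\<And>j. j < i \<Longrightarrow> 0 < w j"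
begin

definition window :: "nat \<Rightarrow> nat \<Rightarrow> real" where
  "window a b = (\<Sum>j = a..<b. w (j mod i))"

lemma window_nonneg: "0 \<le> window a b"
  unfolding window_def using pos two_le_i by (intro sum_nonneg) (simp add: less_imp_le)

lemma window_pos: "a < b \<Longrightarrow> 0 < window a b"
  unfolding window_def using pos two_le_i by (intro sum_pos) auto

lemma window_empty: "b \<le> a \<Longrightarrow> window a b = 0"
  unfolding window_def by simp

lemma window_split: "a \<le> b \<Longrightarrow> b \<le> c \<Longrightarrow> window a c = window a b + window b c"
  unfolding window_def by (simp add: sum.atLeastLessThan_concat)

lemma window_mono: "a' \<le> a \<Longrightarrow> a \<le> b \<Longrightarrow> b \<le> b' \<Longrightarrow> window a b \<le> window a' b'"
  using window_split[of a' a b'] window_split[of a b b'] window_nonneg[of a' a] window_nonneg[of b b']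
  by simp

lemma window_period: "window a (a + i) = sum w {..<i}"
proof (induction a)
  case 0
  show ?case unfolding window_def by (intro sum.cong) auto
next
  case (Suc a)
  have "window a (Suc a + i) = window a (a + i) + w ((a + i) mod i)"
    unfolding window_def by simp
  moreover have "window a (Suc a + i) = w (a mod i) + window (Suc a) (Suc a + i)"
    unfolding window_def by (simp add: sum.atLeast_Suc_lessThan)
  ultimately show ?case using Suc.IH by simp
qed

lemma window_complement: "s \<le> e \<Longrightarrow> e \<le> s + i \<Longrightarrow> window e (s + i) = sum w {..<i} - window s e"
  using window_period[of s] window_split[of s e "s + i"] by simp

lemma sum_arc: "l \<le> i \<Longrightarrow> sum w {(s + j) mod i | j. j < l} = window s (s + l)"
proof -
  assume "l \<le> i"
  have "{(s + j) mod i | j. j < l} = (\<lambda>j. j mod i) ` {s..<s + l}"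
    by (auto simp: image_iff) (metis add_diff_inverse_nat add_less_cancel_left not_le)
  then show ?thesis
    unfolding window_def using sum.reindex[OF inj_on_mod_interval[OF \<open>l \<le> i\<close>], of w]
    by (simp add: comp_def)
qed

definition cut_balance :: "nat \<Rightarrow> nat \<Rightarrow> real" where
  "cut_balance r e = min (window r e) (window e (r + i))"

lemma cut_balance_nonneg: "0 \<le> cut_balance r e"
  unfolding cut_balance_def using window_nonneg by simp

abbreviation arc_balance :: "nat set \<Rightarrow> real" where
  "arc_balance J \<equiv> min (sum w J) (sum w {..<i} - sum w J)"

lemma arc_in_cycle_arcs: "0 < l \<Longrightarrow> l < i \<Longrightarrow> {(s + j) mod i | j. j < l} \<in> cycle_arcs i"
proof -
  assume "0 < l" "l < i"
  moreover have "{(s + j) mod i | j. j < l} = {(s mod i + j) mod i | j. j < l}"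
    by (simp add: mod_add_left_eq)
  moreover have "s mod i < i" using two_le_i by simp
  ultimately show ?thesis unfolding cycle_arcs_def by blast
qed

lemma arc_balance_arc: "l \<le> i \<Longrightarrow> arc_balance {(s + j) mod i | j. j < l} = cut_balance s (s + l)"
  using sum_arc window_complement[of s "s + l"] unfolding cut_balance_def by simp

lemma finite_cycle_arcs: "finite (cycle_arcs i)"
proof -
  have "cycle_arcs i \<subseteq> Pow {..<i}" unfolding cycle_arcs_def using two_le_i by auto
  then show ?thesis by (rule finite_subset) simp
qed

lemma arc_balance_le_best: "J \<in> cycle_arcs i \<Longrightarrow> arc_balance J \<le> best_balance w i"
  unfolding best_balance_def by (intro Max_ge finite_imageI finite_cycle_arcs imageI)

lemma cut_balance_le_best: "r < e \<Longrightarrow> e < r + i \<Longrightarrow> cut_balance r e \<le> best_balance w i"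
  using arc_balance_le_best[OF arc_in_cycle_arcs[of "e - r" r]] arc_balance_arc[of "e - r" r] by simp

lemma best_balance_nonneg: "0 \<le> best_balance w i"
  using cut_balance_le_best[of 0 1] cut_balance_nonneg[of 0 1] two_le_i by simp

lemma best_balance_attained:
  obtains s c where "s < i" "s < c" "c < s + i" "best_balance w i = cut_balance s c"
proof -
  have "cycle_arcs i \<noteq> {}" using arc_in_cycle_arcs[of 1 0] two_le_i by auto
  then have "best_balance w i \<in> arc_balance ` cycle_arcs i"
    unfolding best_balance_def using finite_cycle_arcs by (intro Max_in) auto
  then obtain s l where "s < i" "0 < l" "l < i" "best_balance w i = arc_balance {(s + j) mod i | j. j < l}"
    unfolding cycle_arcs_def by auto
  then show ?thesis using that[of s "s + l"] arc_balance_arc[of l s] by simp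
qed

definition queue :: "nat \<Rightarrow> nat \<Rightarrow> nat list" where
  "queue a b = map (\<lambda>j. j mod i) [a..<b]"

lemma qweight_queue: "qweight w (queue a b) = window a b"
  unfolding qweight_def queue_def window_def by (simp add: interv_sum_list_conv_sum_set_nat comp_def)

lemma queue_Cons: "a < b \<Longrightarrow> queue a b = a mod i # queue (Suc a) b"
  unfolding queue_def by (simp add: upt_conv_Cons)

lemma queue_snoc: "a \<le> b \<Longrightarrow> queue a (Suc b) = queue a b @ [b mod i]"
  unfolding queue_def by simp

lemma head_is_c0_queue: "head_is_c0 (queue a b) \<longleftrightarrow> a < b \<and> a mod i = 0"
  by (cases "a < b") (simp_all add: head_is_c0_def queue_Cons, simp add: queue_def)

definition queues_of :: "nat \<times> nat \<times> real \<Rightarrow> nat list \<times> nat list \<times> real" where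
  "queues_of = (\<lambda>(r, e, b). (queue r e, queue e (r + i), b))"

definition ptr_step :: "nat \<times> nat \<times> real \<Rightarrow> nat \<times> nat \<times> real" where
  "ptr_step = (\<lambda>(r, e, b). let b' = max b (cut_balance r e) in
     if window e (r + i) < window r e then (Suc r, e, b') else (r, Suc e, b'))"

lemma ptr_step_cases:
  assumes "r \<le> e" "e \<le> r + i"
  obtains (pop) "window e (r + i) < window r e" "r < e"
      "ptr_step (r, e, b) = (Suc r, e, max b (cut_balance r e))"
    | (push) "\<not> window e (r + i) < window r e" "e < r + i"
      "ptr_step (r, e, b) = (r, Suc e, max b (cut_balance r e))"
proof (cases "window e (r + i) < window r e")
  case True
  moreover have "r < e"
    using True window_empty[of e r] window_nonneg[of e "r + i"] by (cases "r < e") auto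
  ultimately show ?thesis using pop unfolding ptr_step_def by simp
next
  case False
  moreover have "e < r + i"
    using False window_empty[of "r + i" e] window_pos[of r e] assms two_le_i by (cases "e < r + i") auto
  ultimately show ?thesis using push unfolding ptr_step_def by simp
qed

lemma bic_step_queues_of:
  assumes "r \<le> e" "e \<le> r + i"
  shows "bic_step w (queues_of (r, e, b)) = queues_of (ptr_step (r, e, b))"
  using assms
proof (cases rule: ptr_step_cases[where b = b])
  case pop
  then have "hd (queue r e) = r mod i" "tl (queue r e) = queue (Suc r) e"
    "queue e (Suc r + i) = queue e (r + i) @ [r mod i]"
    using queue_Cons[of r e] queue_snoc[of e "r + i"] assms by auto
  then show ?thesis
    using pop unfolding bic_step_def queues_of_def by (simp add: qweight_queue cut_balance_def Let_def)
next
  case push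
  then have "hd (queue e (r + i)) = e mod i" "tl (queue e (r + i)) = queue (Suc e) (r + i)"
    "queue r (Suc e) = queue r e @ [e mod i]"
    using queue_Cons[of e "r + i"] queue_snoc[of r e] assms by auto
  then show ?thesis
    using push unfolding bic_step_def queues_of_def by (simp add: qweight_queue cut_balance_def Let_def)
qed

definition ptr :: "nat \<Rightarrow> nat \<times> nat \<times> real" where
  "ptr t = (ptr_step ^^ t) (0, 0, 0)"

abbreviation R :: "nat \<Rightarrow> nat" where "R t \<equiv> fst (ptr t)"
abbreviation E :: "nat \<Rightarrow> nat" where "E t \<equiv> fst (snd (ptr t))"
abbreviation B :: "nat \<Rightarrow> real" where "B t \<equiv> snd (snd (ptr t))"

lemma ptr_0: "ptr 0 = (0, 0, 0)"
  unfolding ptr_def by simp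

lemma ptr_Suc: "ptr (Suc t) = ptr_step (ptr t)"
  unfolding ptr_def by simp

lemma ptr_invariant: "R t \<le> E t \<and> E t \<le> R t + i"
proof (induction t)
  case 0
  then show ?case by (simp add: ptr_0)
next
  case (Suc t)
  obtain r e b where st: "ptr t = (r, e, b)" by (cases "ptr t") auto
  from Suc.IH st have inv: "r \<le> e" "e \<le> r + i" by simp_all
  then show ?case by (cases rule: ptr_step_cases[where b = b]) (use inv in \<open>simp_all add: ptr_Suc st\<close>)
qed

lemma ptr_cases:
  obtains (pop) "window (E t) (R t + i) < window (R t) (E t)" "R t < E t"
      "R (Suc t) = Suc (R t)" "E (Suc t) = E t"
    | (push) "\<not> window (E t) (R t + i) < window (R t) (E t)" "E t < R t + i"
      "R (Suc t) = R t" "E (Suc t) = Suc (E t)"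
proof -
  obtain r e b where st: "ptr t = (r, e, b)" by (cases "ptr t") auto
  from ptr_invariant[of t] st have "r \<le> e" "e \<le> r + i" by simp_all
  then show ?thesis by (cases rule: ptr_step_cases[where b = b]) (simp_all add: ptr_Suc st that)
qed

lemma B_Suc: "B (Suc t) = max (B t) (cut_balance (R t) (E t))"
  by (cases "ptr t") (simp add: ptr_Suc ptr_step_def Let_def)

lemma bic_state_ptr: "bic_state w i t = queues_of (ptr t)"
proof (induction t)
  case 0
  have "queue 0 i = [0..<i]" unfolding queue_def by (intro map_idI) simp
  then show ?case by (simp add: bic_state_def ptr_0 queues_of_def queue_def)
next
  case (Suc t)
  obtain r e b where st: "ptr t = (r, e, b)" by (cases "ptr t") auto
  from ptr_invariant[of t] st have "r \<le> e" "e \<le> r + i" by simp_all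
  have "bic_state w i (Suc t) = bic_step w (bic_state w i t)"
    unfolding bic_state_def by simp
  also have "\<dots> = queues_of (ptr (Suc t))"
    using Suc.IH bic_step_queues_of[OF \<open>r \<le> e\<close> \<open>e \<le> r + i\<close>] by (simp add: st ptr_Suc)
  finally show ?case .
qed

lemma R_plus_E: "R t + E t = t"
proof (induction t)
  case 0
  show ?case by (simp add: ptr_0)
next
  case (Suc t)
  then show ?case by (cases t rule: ptr_cases) simp_all
qed

lemma R_Suc_le: "R (Suc t) \<le> Suc (R t)"
  by (cases t rule: ptr_cases) simp_all

lemma E_Suc_le: "E (Suc t) \<le> Suc (E t)"
  by (cases t rule: ptr_cases) simp_all

lemma mono_R: "mono R"
  by (rule monoI, rule lift_Suc_mono_le) (use ptr_cases in \<open>metis le_SucI order_refl\<close>)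

lemma mono_B: "mono B"
  by (rule monoI, rule lift_Suc_mono_le) (simp add: B_Suc)

lemma pop_if_R_Suc: "R (Suc t) = Suc (R t) \<Longrightarrow> window (E t) (R t + i) < window (R t) (E t) \<and> R t < E t"
  by (cases t rule: ptr_cases) simp_all

lemma push_if_E_Suc: "E (Suc t) = Suc (E t) \<Longrightarrow> \<not> window (E t) (R t + i) < window (R t) (E t)"
  by (cases t rule: ptr_cases) simp_all

lemma R_crossing: "v < R t \<Longrightarrow> \<exists>u<t. R u = v \<and> R (Suc u) = Suc v"
  by (rule unit_step_crossing) (simp_all add: R_Suc_le ptr_0)

lemma E_crossing: "v < E t \<Longrightarrow> \<exists>u<t. E u = v \<and> E (Suc u) = Suc v"
  by (rule unit_step_crossing) (simp_all add: E_Suc_le ptr_0)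

lemma halt_reachable: "\<exists>t. R t = i \<and> R t < E t"
proof -
  have "i < R (3 * i + 2)"
    using R_plus_E[of "3 * i + 2"] ptr_invariant[of "3 * i + 2"] by linarith
  then obtain u where "R u = i" "R (Suc u) = Suc i"
    using R_crossing by blast
  then show ?thesis using pop_if_R_Suc[of u] by auto
qed

(* c_0 heads Q1 for the second time as soon as c_0, ..., c_(i-1) have all left Q1
   and Q1 is non-empty. *)
definition halt_time :: nat where
  "halt_time = (LEAST t. R t = i \<and> R t < E t)"

lemma R_halt_time: "R halt_time = i" and R_less_E_halt_time: "R halt_time < E halt_time"
  using LeastI_ex[OF halt_reachable] unfolding halt_time_def by auto

lemma halt_time_le: "R t = i \<Longrightarrow> R t < E t \<Longrightarrow> halt_time \<le> t"
  unfolding halt_time_def by (rule Least_le) simp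

lemma R_le_i: "t \<le> halt_time \<Longrightarrow> R t \<le> i"
proof (rule ccontr)
  assume "t \<le> halt_time" "\<not> R t \<le> i"
  then obtain u where "u < t" "R u = i" "R (Suc u) = Suc i"
    using R_crossing[of i t] by auto
  then have "halt_time \<le> u" using pop_if_R_Suc[of u] halt_time_le by simp
  then show False using \<open>u < t\<close> \<open>t \<le> halt_time\<close> by simp
qed

lemma two_le_halt_time: "2 \<le> halt_time"
  using R_plus_E[of halt_time] R_halt_time two_le_i by linarith

lemma R_1: "R 1 = 0"
  by (cases rule: ptr_cases[where t = 0]) (simp_all add: ptr_0)

lemma head_is_c0_bic_state: "head_is_c0 (fst (bic_state w i t)) \<longleftrightarrow> R t < E t \<and> R t mod i = 0"
  by (cases "ptr t") (simp add: bic_state_ptr queues_of_def head_is_c0_queue)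

lemma head_is_c0_before_halt:
  assumes "t \<le> halt_time"
  shows "head_is_c0 (fst (bic_state w i t)) \<longleftrightarrow> (0 < t \<and> R t = 0) \<or> t = halt_time"
proof -
  consider "R t = 0" | "0 < R t" "R t < i" | "R t = i"
    using R_le_i[OF assms] by linarith
  then show ?thesis
  proof cases
    case 1
    then show ?thesis using R_plus_E[of t] R_halt_time two_le_i by (auto simp: head_is_c0_bic_state)
  next
    case 2
    then show ?thesis using R_halt_time by (auto simp: head_is_c0_bic_state)
  next
    case 3
    then show ?thesis
      using assms halt_time_le[of t] R_less_E_halt_time two_le_i by (auto simp: head_is_c0_bic_state)
  qed
qed

lemma bic_becomes_before_halt:
  assumes "t \<le> halt_time"
  shows "bic_becomes w i t \<longleftrightarrow> t = 1 \<or> t = halt_time"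
proof -
  have R_pred: "R (halt_time - 1) \<noteq> 0"
    using R_Suc_le[of "halt_time - 1"] R_halt_time two_le_i two_le_halt_time by simp
  have R_zero: "R (t - 1) = 0" if "R t = 0"
    using monoD[OF mono_R, of "t - 1" t] that by simp
  show ?thesis
    unfolding bic_becomes_def
    using head_is_c0_before_halt[OF assms] head_is_c0_before_halt[of "t - 1"] assms
      R_1 R_pred R_zero two_le_halt_time
    by (cases "t = 1") auto
qed

lemma card_bic_becomes: "card {t. t \<le> halt_time \<and> bic_becomes w i t} = 2"
proof -
  have "{t. t \<le> halt_time \<and> bic_becomes w i t} = {1, halt_time}"
    using bic_becomes_before_halt two_le_halt_time by auto
  then show ?thesis using two_le_halt_time by simp
qed

lemma cut_balance_ptr_le_best: "cut_balance (R t) (E t) \<le> best_balance w i"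
proof (cases "R t < E t \<and> E t < R t + i")
  case True
  then show ?thesis using cut_balance_le_best by simp
next
  case False
  then have "window (R t) (E t) = 0 \<or> window (E t) (R t + i) = 0"
    using ptr_invariant[of t] window_empty[of "R t" "E t"] window_empty[of "E t" "R t + i"] by auto
  then have "cut_balance (R t) (E t) \<le> 0"
    unfolding cut_balance_def by auto
  then show ?thesis using best_balance_nonneg by simp
qed

lemma B_le_best: "B t \<le> best_balance w i"
  by (induction t) (simp_all add: ptr_0 B_Suc best_balance_nonneg cut_balance_ptr_le_best)

lemma cut_balance_ptr_le_B: "u < t \<Longrightarrow> cut_balance (R u) (E u) \<le> B t"
  using monoD[OF mono_B, of "Suc u" t] B_Suc[of u] by simp

lemma cut_dominated_before_halt:
  assumes "s < i" "s < c" "c < s + i"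
  shows "\<exists>u<halt_time. cut_balance s c \<le> cut_balance (R u) (E u)"
proof -
  obtain u where u: "u < halt_time" "R u = s" "R (Suc u) = Suc s"
    using R_crossing[of s halt_time] R_halt_time assms(1) by auto
  then have pop: "window (E u) (s + i) < window s (E u)"
    using pop_if_R_Suc[of u] by simp
  show ?thesis
  proof (cases "E u \<le> c")
    case True
    have "window c (s + i) \<le> window (E u) (s + i)"
      using window_mono True assms(3) by simp
    then have "cut_balance s c \<le> cut_balance (R u) (E u)"
      using pop u(2) unfolding cut_balance_def by simp
    then show ?thesis using u(1) by blast
  next
    case False
    then obtain t where t: "t < u" "E t = c" "E (Suc t) = Suc c"
      using E_crossing by (meson not_le)
    then have push: "window (R t) c \<le> window c (R t + i)"
      using push_if_E_Suc[of t] by simp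
    have "R t \<le> s" using monoD[OF mono_R, of t u] t(1) u(2) by simp
    then have "window s c \<le> window (R t) c"
      using window_mono assms(2) by simp
    then have "cut_balance s c \<le> cut_balance (R t) (E t)"
      using push t(2) unfolding cut_balance_def by simp
    then show ?thesis using t(1) u(1) by (meson order.strict_trans)
  qed
qed

lemma best_le_B_halt_time: "best_balance w i \<le> B halt_time"
proof -
  obtain s c where "s < i" "s < c" "c < s + i" and best: "best_balance w i = cut_balance s c"
    by (rule best_balance_attained)
  then obtain u where "u < halt_time" "cut_balance s c \<le> cut_balance (R u) (E u)"
    using cut_dominated_before_halt by blast
  then show ?thesis using best cut_balance_ptr_le_B[of u halt_time] by simp
qed

end

theorem lemma5:
  fixes w :: "nat \<Rightarrow> real" and i :: nat
  assumes "i \<ge> 2"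
    and "\<And>j. j < i \<Longrightarrow> w j > 0"
  shows "\<exists>k. bic_becomes w i k \<and> card {t. t \<le> k \<and> bic_becomes w i t} = 2
            \<and> snd (snd (bic_state w i k)) = best_balance w i"
proof -
  interpret balance_in_cycle w i
    using assms by unfold_locales
  have "snd (snd (bic_state w i halt_time)) = B halt_time"
    by (cases "ptr halt_time") (simp add: bic_state_ptr queues_of_def)
  then have "snd (snd (bic_state w i halt_time)) = best_balance w i"
    using B_le_best[of halt_time] best_le_B_halt_time by simp
  moreover have "bic_becomes w i halt_time"
    using bic_becomes_before_halt by simp
  ultimately show ?thesis using card_bic_becomes by blast
qed

end
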